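(* Let $f\in\mathcal U(1)$ with $\dfrac{z}{f(z)}=1+\sum_{n=1}^\infty b_nz^n$ in $\mathbb D$, and let $\theta\in[0,2\pi)$. Define $f_3,f_4$ by $$\frac{z}{f_3(z)}=1+\sum_{n=1}^\infty b_n\cos(n\theta)z^n,\qquad \frac{z}{f_4(z)}=1+\sum_{n=1}^\infty b_n\sin(n\theta)z^n.$$ If $z/f_3(z)\ne0$ in $\mathbb D$ then $f_3\in\mathcal U(1)$, and if $z/f_4(z)\ne0$ in $\mathbb D$ then $f_4\in\mathcal U(1)$.
   Context: $\mathbb D=\{z\in\mathbb C:|z|<1\}$. $\mathcal A$ is the class of functions $f$ analytic in $\mathbb D$ with $f(z)=z+\sum_{k\ge2}a_kz^k$. For $f\in\mathcal A$ with $f(z)\ne0$ for $z\in\mathbb D\setminus\{0\}$, set $U_f(z)=\left(\frac{z}{f(z)}\right)^2f'(z)-1$. $\mathcal U(1)$ is the class of such $f\in\mathcal A$ with $|U_f(z)|<1$ for all $z\in\mathbb D$. *)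

theory Defs
  imports "HOL-Complex_Analysis.Complex_Analysis"
begin

definition classA :: "(complex \<Rightarrow> complex) \<Rightarrow> bool" where
  "classA f \<longleftrightarrow> f holomorphic_on ball 0 1 \<and> f 0 = 0 \<and> deriv f 0 = 1"

text \<open>U_f(z) = (z/f(z))^2 f'(z) - 1, meaningful for z nonzero (at z = 0 its
  value is 0 by continuity, so the condition there is automatic).\<close>
definition Ufun :: "(complex \<Rightarrow> complex) \<Rightarrow> complex \<Rightarrow> complex" where
  "Ufun f z = (z / f z)^2 * deriv f z - 1"

definition classU1 :: "(complex \<Rightarrow> complex) \<Rightarrow> bool" where
  "classU1 f \<longleftrightarrow> classA f \<and> (\<forall>z\<in>ball 0 1 - {0}. f z \<noteq> 0)
     \<and> (\<forall>z\<in>ball 0 1 - {0}. norm (Ufun f z) < 1)"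

definition modseries :: "(nat \<Rightarrow> complex) \<Rightarrow> (nat \<Rightarrow> real) \<Rightarrow> complex \<Rightarrow> complex" where
  "modseries b c z = 1 + (\<Sum>n. b (Suc n) * complex_of_real (c (Suc n)) * z ^ Suc n)"

end

theory Submission
  imports Defs
begin

text \<open>Writing g(z) = z/f(z), one has U_f(z) = g(z) - z g'(z) - 1: an affine expression in g
  that commutes with the rotations z \<mapsto> \<alpha>z, |\<alpha>| = 1. Since cos(n\<theta>) and sin(n\<theta>) are of the form
  c e^(in\<theta>) + d e^(-in\<theta>) with |c| + |d| = 1, the functions z/f_3(z) and z/f_4(z) equal
  1 + c (g(\<alpha>z) - 1) + d (g(\<beta>z) - 1) with \<alpha> = e^(i\<theta>), \<beta> = e^(-i\<theta>). Hence U_f_3 and U_f_4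
  are the same combinations of two values of U_f, each of modulus less than 1.\<close>

lemma norm_lincomb_less_one:
  fixes u v c d :: "'a :: real_normed_field"
  assumes "norm u < 1" "norm v < 1" "norm c + norm d \<le> 1"
  shows "norm (c * u + d * v) < 1"
proof -
  have "norm (c * u + d * v) \<le> norm c * norm u + norm d * norm v"
    by (metis norm_mult norm_triangle_ineq)
  also have "\<dots> \<le> (norm c + norm d) * max (norm u) (norm v)"
    unfolding distrib_right by (intro add_mono mult_left_mono) auto
  also have "\<dots> \<le> max (norm u) (norm v)"
    using assms(3) by (intro mult_left_le_one_le) (auto simp: le_max_iff_disj)
  also have "\<dots> < 1"
    using assms(1,2) by simp
  finally show ?thesis .
qed

lemma holomorphic_on_power_series_ball:
  fixes a :: "nat \<Rightarrow> complex"
  assumes "\<And>z. z \<in> ball 0 r \<Longrightarrow> summable (\<lambda>n. a n * z ^ n)"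
  shows "(\<lambda>z. \<Sum>n. a n * z ^ n) holomorphic_on ball 0 r"
proof -
  have "ereal r \<le> fps_conv_radius (Abs_fps a)"
    unfolding fps_conv_radius_def fps_nth_Abs_fps
    by (rule conv_radius_geI_ex') (auto intro: assms)
  then have "ball 0 r \<subseteq> eball 0 (fps_conv_radius (Abs_fps a))"
    by (rule ball_eball_mono)
  then have "eval_fps (Abs_fps a) holomorphic_on ball 0 r"
    by (rule holomorphic_on_eval_fps)
  then show ?thesis
    by (simp add: eval_fps_def[abs_def])
qed

lemma has_field_derivative_div_self:
  assumes "G field_differentiable at z" "G z \<noteq> 0"
  shows "((\<lambda>w. w / G w) has_field_derivative (G z - z * deriv G z) / (G z)\<^sup>2) (at z)"
  using DERIV_divide[OF DERIV_ident DERIV_deriv_iff_field_differentiable[THEN iffD2, OF assms(1)]]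
    assms(2)
  by (simp add: power2_eq_square)

lemma Ufun_div_self:
  assumes "G field_differentiable at z" "G z \<noteq> 0" "z \<noteq> 0"
  shows "Ufun (\<lambda>w. w / G w) z = G z - z * deriv G z - 1"
  using DERIV_imp_deriv[OF has_field_derivative_div_self[OF assms(1,2)]] assms(2,3)
  by (simp add: Ufun_def field_simps)

lemma classU1_cong:
  assumes "\<And>z. z \<in> ball 0 1 \<Longrightarrow> f z = g z"
  shows "classU1 f \<longleftrightarrow> classU1 g"
proof -
  have deriv_eq: "deriv f z = deriv g z" if "z \<in> ball 0 1" for z
    using that assms
    by (intro deriv_cong_ev eventually_mono[OF eventually_nhds_in_open[of "ball 0 1"]]) auto
  then have "Ufun f z = Ufun g z" if "z \<in> ball 0 1" for z
    using that assms by (simp add: Ufun_def)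
  moreover have "f holomorphic_on ball 0 1 \<longleftrightarrow> g holomorphic_on ball 0 1"
    using assms by (rule holomorphic_cong[OF refl])
  ultimately show ?thesis
    using assms deriv_eq by (simp add: classU1_def classA_def)
qed

lemma classU1_div_selfI:
  assumes hol: "G holomorphic_on ball 0 1" and nz: "\<And>z. z \<in> ball 0 1 \<Longrightarrow> G z \<noteq> 0"
    and "G 0 = 1"
    and bound: "\<And>z. z \<in> ball 0 1 - {0} \<Longrightarrow> norm (G z - z * deriv G z - 1) < 1"
  shows "classU1 (\<lambda>z. z / G z)"
proof -
  have diff: "G field_differentiable at z" if "z \<in> ball 0 1" for z
    using hol that by (meson holomorphic_on_imp_differentiable_at open_ball)
  have "deriv (\<lambda>z. z / G z) 0 = 1"
    using DERIV_imp_deriv[OF has_field_derivative_div_self[OF diff]] \<open>G 0 = 1\<close> by simp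
  moreover have "(\<lambda>z. z / G z) holomorphic_on ball 0 1"
    using hol nz by (intro holomorphic_intros) auto
  ultimately show ?thesis
    using nz bound Ufun_div_self[OF diff nz] by (auto simp: classU1_def classA_def)
qed

lemma classU1_reciprocal_bound:
  assumes "classU1 f" and hol: "P holomorphic_on ball 0 1"
    and P: "\<And>w. w \<in> ball 0 1 - {0} \<Longrightarrow> P w = w / f w"
    and w: "w \<in> ball 0 1 - {0}"
  shows "norm (P w - w * deriv P w - 1) < 1"
proof -
  have f_nz: "f x \<noteq> 0" if "x \<in> ball 0 1 - {0}" for x
    using \<open>classU1 f\<close> that by (simp add: classU1_def)
  have f_eq: "f x = x / P x" if "x \<in> ball 0 1 - {0}" for x
    using P[OF that] f_nz[OF that] that by simp
  have "norm (Ufun f w) < 1"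
    using \<open>classU1 f\<close> w by (simp add: classU1_def)
  have "deriv f w = deriv (\<lambda>x. x / P x) w"
    using w f_eq
    by (intro deriv_cong_ev eventually_mono[OF eventually_nhds_in_open[of "ball 0 1 - {0}"]])
       (auto simp: open_Diff)
  then have "Ufun f w = Ufun (\<lambda>x. x / P x) w"
    using f_eq[OF w] by (simp add: Ufun_def)
  also have "\<dots> = P w - w * deriv P w - 1"
    using hol w P[OF w] f_nz[OF w]
    by (intro Ufun_div_self) (auto intro: holomorphic_on_imp_differentiable_at)
  finally show ?thesis
    using \<open>norm (Ufun f w) < 1\<close> by simp
qed

lemma rotation_lincomb_bound:
  fixes P :: "complex \<Rightarrow> complex"
  assumes hol: "P holomorphic_on ball 0 1"
    and bound: "\<And>w. w \<in> ball 0 1 - {0} \<Longrightarrow> norm (P w - w * deriv P w - 1) < 1"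
    and "norm \<alpha> = 1" "norm \<beta> = 1" "norm c + norm d \<le> 1" and z: "z \<in> ball 0 1 - {0}"
  defines "G \<equiv> \<lambda>z. 1 + c * (P (\<alpha> * z) - 1) + d * (P (\<beta> * z) - 1)"
  shows "norm (G z - z * deriv G z - 1) < 1"
proof -
  have rot: "\<gamma> * z \<in> ball 0 1 - {0}" if "norm \<gamma> = 1" for \<gamma>
    using z that by (auto simp: norm_mult)
  have dP: "((\<lambda>z. P (\<gamma> * z)) has_field_derivative deriv P (\<gamma> * z) * \<gamma>) (at z)"
    if "norm \<gamma> = 1" for \<gamma>
  proof -
    have "(P has_field_derivative deriv P (\<gamma> * z)) (at (\<gamma> * z))"
      using hol rot[OF that] by (meson DiffD1 holomorphic_derivI open_ball)
    from DERIV_chain2[OF this DERIV_cmult[OF DERIV_ident, of \<gamma>]] show ?thesis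
      by simp
  qed
  have "(G has_field_derivative
          0 + c * (deriv P (\<alpha> * z) * \<alpha> - 0) + d * (deriv P (\<beta> * z) * \<beta> - 0)) (at z)"
    unfolding G_def using \<open>norm \<alpha> = 1\<close> \<open>norm \<beta> = 1\<close>
    by (intro DERIV_add DERIV_cmult DERIV_diff DERIV_const dP)
  then have "G z - z * deriv G z - 1 =
      c * (P (\<alpha> * z) - \<alpha> * z * deriv P (\<alpha> * z) - 1)
      + d * (P (\<beta> * z) - \<beta> * z * deriv P (\<beta> * z) - 1)"
    by (simp add: DERIV_imp_deriv G_def algebra_simps)
  with norm_lincomb_less_one[OF bound[OF rot] bound[OF rot] \<open>norm c + norm d \<le> 1\<close>]
    show ?thesis
    using \<open>norm \<alpha> = 1\<close> \<open>norm \<beta> = 1\<close> by simp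
qed

lemma classU1_rotation_lincomb:
  assumes f: "classU1 f" and hol: "P holomorphic_on ball 0 1" and "P 0 = 1"
    and P: "\<And>w. w \<in> ball 0 1 - {0} \<Longrightarrow> P w = w / f w"
    and "norm \<alpha> = 1" "norm \<beta> = 1" "norm c + norm d \<le> 1"
    and M: "\<And>z. z \<in> ball 0 1 \<Longrightarrow> M z = 1 + c * (P (\<alpha> * z) - 1) + d * (P (\<beta> * z) - 1)"
    and M_nz: "\<And>z. z \<in> ball 0 1 \<Longrightarrow> M z \<noteq> 0"
  shows "classU1 (\<lambda>z. z / M z)"
proof -
  define G where "G = (\<lambda>z. 1 + c * (P (\<alpha> * z) - 1) + d * (P (\<beta> * z) - 1))"
  have rot_hol: "(\<lambda>z. P (\<gamma> * z)) holomorphic_on ball 0 1" if "norm \<gamma> = 1" for \<gamma>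
  proof -
    have "(*) \<gamma> ` ball 0 1 \<subseteq> ball 0 1"
      using that by (auto simp: norm_mult)
    then show ?thesis
      using holomorphic_on_compose_gen[OF holomorphic_on_linear hol] by (simp add: o_def)
  qed
  have "classU1 (\<lambda>z. z / G z)"
  proof (rule classU1_div_selfI)
    show "G holomorphic_on ball 0 1"
      unfolding G_def using rot_hol \<open>norm \<alpha> = 1\<close> \<open>norm \<beta> = 1\<close> by (intro holomorphic_intros)
    show "G z \<noteq> 0" if "z \<in> ball 0 1" for z
      using M_nz M that by (simp add: G_def)
    show "G 0 = 1"
      using \<open>P 0 = 1\<close> by (simp add: G_def)
    show "norm (G z - z * deriv G z - 1) < 1" if "z \<in> ball 0 1 - {0}" for z
      unfolding G_def using classU1_reciprocal_bound[OF f hol P] that assms(5-7)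
      by (intro rotation_lincomb_bound[OF hol]) auto
  qed
  moreover have "classU1 (\<lambda>z. z / M z) \<longleftrightarrow> classU1 (\<lambda>z. z / G z)"
    by (rule classU1_cong) (simp add: M G_def)
  ultimately show ?thesis
    by simp
qed

lemma holomorphic_on_modseries:
  assumes "\<And>z. z \<in> ball 0 r \<Longrightarrow> summable (\<lambda>n. b (Suc n) * of_real (c (Suc n)) * z ^ Suc n)"
  shows "modseries b c holomorphic_on ball 0 r"
proof -
  define a where "a n = (if n = 0 then 0 else b n * of_real (c n))" for n
  have tail: "(\<lambda>n. a (Suc n) * z ^ Suc n) sums (modseries b c z - 1)" if "z \<in> ball 0 r" for z
    using summable_sums[OF assms[OF that]] by (simp add: a_def modseries_def)
  have sums_a: "(\<lambda>n. a n * z ^ n) sums (modseries b c z - 1)" if "z \<in> ball 0 r" for z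
    using sums_Suc_iff[of "\<lambda>n. a n * z ^ n", THEN iffD1, OF tail[OF that]] by (simp add: a_def)
  have "(\<lambda>z. \<Sum>n. a n * z ^ n) holomorphic_on ball 0 r"
    using sums_a by (intro holomorphic_on_power_series_ball) (auto intro: sums_summable)
  then have "(\<lambda>z. 1 + (\<Sum>n. a n * z ^ n)) holomorphic_on ball 0 r"
    by (intro holomorphic_intros)
  then show ?thesis
    by (rule holomorphic_transform) (simp add: sums_iff[THEN iffD1, OF sums_a])
qed

lemma modseries_rotation_lincomb:
  assumes coeff: "\<And>n. c * cis (real n * \<theta>) + d * cis (- (real n * \<theta>)) = of_real (h n)"
    and summable_pos: "summable (\<lambda>n. b (Suc n) * (cis \<theta> * z) ^ Suc n)"
    and summable_neg: "summable (\<lambda>n. b (Suc n) * (cis (- \<theta>) * z) ^ Suc n)"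
  shows "modseries b h z = 1 + c * (modseries b (\<lambda>_. 1) (cis \<theta> * z) - 1)
                             + d * (modseries b (\<lambda>_. 1) (cis (- \<theta>) * z) - 1)"
proof -
  have term_eq: "c * (b (Suc n) * (cis \<theta> * z) ^ Suc n) + d * (b (Suc n) * (cis (- \<theta>) * z) ^ Suc n)
      = b (Suc n) * of_real (h (Suc n)) * z ^ Suc n" for n
  proof -
    have "c * (b (Suc n) * (cis \<theta> * z) ^ Suc n) + d * (b (Suc n) * (cis (- \<theta>) * z) ^ Suc n)
        = b (Suc n) * (c * cis (real (Suc n) * \<theta>) + d * cis (- (real (Suc n) * \<theta>))) * z ^ Suc n"
      by (simp only: power_mult_distrib Complex.DeMoivre mult_minus_right) (simp add: algebra_simps)
    then show ?thesis
      by (simp only: coeff)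
  qed
  have "(\<lambda>n. c * (b (Suc n) * (cis \<theta> * z) ^ Suc n) + d * (b (Suc n) * (cis (- \<theta>) * z) ^ Suc n))
      sums (c * (modseries b (\<lambda>_. 1) (cis \<theta> * z) - 1) + d * (modseries b (\<lambda>_. 1) (cis (- \<theta>) * z) - 1))"
    using summable_sums[OF summable_pos] summable_sums[OF summable_neg]
    by (intro sums_add sums_mult) (simp_all add: modseries_def)
  then show ?thesis
    unfolding term_eq by (simp add: modseries_def sums_iff)
qed

theorem mainTheorem12:
  fixes f :: "complex \<Rightarrow> complex" and b :: "nat \<Rightarrow> complex" and \<theta> :: real
  assumes "classU1 f"
    and "\<forall>z\<in>ball 0 1 - {0}. (\<lambda>n. b (Suc n) * z ^ Suc n) sums (z / f z - 1)"
    and "0 \<le> \<theta>" and "\<theta> < 2 * pi"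
  shows "((\<forall>z\<in>ball 0 1. modseries b (\<lambda>n. cos (real n * \<theta>)) z \<noteq> 0) \<longrightarrow>
            classU1 (\<lambda>z. z / modseries b (\<lambda>n. cos (real n * \<theta>)) z))
       \<and> ((\<forall>z\<in>ball 0 1. modseries b (\<lambda>n. sin (real n * \<theta>)) z \<noteq> 0) \<longrightarrow>
            classU1 (\<lambda>z. z / modseries b (\<lambda>n. sin (real n * \<theta>)) z))"
proof -
  define P where "P = modseries b (\<lambda>_. 1)"
  have summable: "summable (\<lambda>n. b (Suc n) * w ^ Suc n)" if "w \<in> ball 0 1" for w
    using assms(2) that by (cases "w = 0") (auto intro: sums_summable)
  have P_quot: "P w = w / f w" if "w \<in> ball 0 1 - {0}" for w
    using assms(2) that by (simp add: P_def modseries_def sums_iff)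
  have P_hol: "P holomorphic_on ball 0 1"
    unfolding P_def using summable by (intro holomorphic_on_modseries) simp
  have "P 0 = 1"
    by (simp add: P_def modseries_def)
  have rotation: "(\<forall>z\<in>ball 0 1. modseries b h z \<noteq> 0) \<longrightarrow> classU1 (\<lambda>z. z / modseries b h z)"
    if coeff: "\<And>n. c * cis (real n * \<theta>) + d * cis (- (real n * \<theta>)) = of_real (h n)"
      and "norm c + norm d \<le> 1" for h c d
  proof
    assume "\<forall>z\<in>ball 0 1. modseries b h z \<noteq> 0"
    moreover have "cis t * z \<in> ball 0 1" if "z \<in> ball 0 1" for t z
      using that by (simp add: norm_mult)
    ultimately show "classU1 (\<lambda>z. z / modseries b h z)"
      using \<open>norm c + norm d \<le> 1\<close>
      by (intro classU1_rotation_lincomb[OF assms(1) P_hol \<open>P 0 = 1\<close> P_quot, of "cis \<theta>" "cis (- \<theta>)"])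
         (auto simp: P_def intro!: modseries_rotation_lincomb[OF coeff] summable)
  qed
  have "1/2 * cis x + 1/2 * cis (- x) = of_real (cos x)" for x
    by (simp add: complex_eq_iff)
  moreover have "- \<i>/2 * cis x + \<i>/2 * cis (- x) = of_real (sin x)" for x
    by (simp add: complex_eq_iff)
  ultimately show ?thesis
    using rotation[of "1/2" "1/2"] rotation[of "- \<i>/2" "\<i>/2"] by (simp add: norm_divide)
qed

end
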